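(* For every vertex $x\in\Gamma$ and every $t\in\Gamma'_x$, all zeros of the polynomial $P_{x,t}$ are real. Moreover, for every $x\in\Gamma$, the zeros of $P_{x,x}$ and of $P_{x,x'}$ are simple, $\deg P_{x,x'}=\deg P_{x,x}+1$, and the zeros strictly interlace: if $a_1<a_2<\dots<a_n$ are the zeros of $P_{x,x'}$, then $P_{x,x}$ has exactly $n-1$ zeros $b_1<\dots<b_{n-1}$ and $a_1<b_1<a_2<b_2<\dots<b_{n-1}<a_n$.
   Context: Let $\Gamma$ be an infinite connected tree whose vertices are arranged in levels $\ell(x)\in\{0,1,2,\dots\}$: every vertex $x$ is adjacent to exactly one vertex $x'$ with $\ell(x')=\ell(x)+1$; for $\ell(x)\ge 1$ the set $N_x=\{y:\ y'=x\}$ of neighbours of $x$ on level $\ell(x)-1$ is finite and nonempty; $N_x=\emptyset$ if $\ell(x)=0$; there are no other edges. For $x\in\Gamma$, $\Gamma_x$ is the finite subtree consisting of $x$ and all its descendants (vertices $y$ with $\ell(y)<\ell(x)$ joined to $x$ by a path), and $\Gamma'_x=\Gamma_x\cup\{x'\}$. Fix numbers $\lambda_x>0$ and $\beta_x\in\mathbb R$, $x\in\Gamma$. The Jacobi matrix $J$ acts on functions $v:\Gamma\to\mathbb C$ by $(Jv)(x)=\lambda_x v(x')+\beta_x v(x)+\sum_{y\in N_x}\lambda_y v(y)$. The polynomials $P_{x,t}$ ($x\in\Gamma$, $t\in\Gamma'_x$) in the variable $z$ are defined recursively on $\ell(x)$: if $\ell(x)=0$ then $\Gamma'_x=\{x,x'\}$,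 $P_{x,x}=1$, $P_{x,x'}(z)=(z-\beta_x)/\lambda_x$. If $\ell(x)\ge1$: $P_{x,x}$ is the monic least common multiple of the polynomials $\{P_{y,x}:\ y\in N_x\}$; for $y\in N_x$ and $t\in\Gamma_y$, $P_{x,t}=P_{x,x}\,P_{y,t}/P_{y,x}$; and $P_{x,x'}=\lambda_x^{-1}\big((z-\beta_x)P_{x,x}-\sum_{y\in N_x}\lambda_yP_{x,y}\big)$. (These are polynomials with real coefficients and positive leading coefficients.) *)

theory Defs
  imports "HOL-Computational_Algebra.Computational_Algebra" "HOL-Computational_Algebra.Field_as_Ring"
begin

text \<open>The tree is given by a parent map par (x' = par x) and a level function.
  N x = children of x, desc x = Gamma_x (x and its descendants).\<close>

definition children :: "('v \<Rightarrow> 'v) \<Rightarrow> 'v \<Rightarrow> 'v set" where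
  "children par x = {y. par y = x}"

definition desc :: "('v \<Rightarrow> 'v) \<Rightarrow> 'v \<Rightarrow> 'v set" where
  "desc par x = {y. \<exists>k. (par ^^ k) y = x}"

definition desc' :: "('v \<Rightarrow> 'v) \<Rightarrow> 'v \<Rightarrow> 'v set" where
  "desc' par x = insert (par x) (desc par x)"

definition tree_struct :: "('v \<Rightarrow> 'v) \<Rightarrow> ('v \<Rightarrow> nat) \<Rightarrow> bool" where
  "tree_struct par lev \<longleftrightarrow>
     (\<forall>x. lev (par x) = Suc (lev x)) \<and>
     (\<forall>x. finite (children par x)) \<and>
     (\<forall>x. lev x \<ge> 1 \<longrightarrow> children par x \<noteq> {}) \<and>
     (\<forall>x y. \<exists>m n. (par ^^ m) x = (par ^^ n) y)"

text \<open>PQ n x t is P_{x,t} for a vertex x of level n (recursion on the level).\<close>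

primrec PQ :: "('v \<Rightarrow> 'v) \<Rightarrow> ('v \<Rightarrow> real) \<Rightarrow> ('v \<Rightarrow> real) \<Rightarrow> nat \<Rightarrow> 'v \<Rightarrow> 'v \<Rightarrow> real poly" where
  "PQ par lam bet 0 x t =
     (if t = x then 1
      else if t = par x then smult (1 / lam x) [:- bet x, 1:]
      else 0)"
| "PQ par lam bet (Suc n) x t =
     (let Pxx = Lcm ((\<lambda>y. PQ par lam bet n y x) ` children par x);
          Pxt = (\<lambda>y s. Pxx * PQ par lam bet n y s div PQ par lam bet n y x)
      in if t = x then Pxx
         else if t = par x then
           smult (1 / lam x) ([:- bet x, 1:] * Pxx - (\<Sum>y\<in>children par x. smult (lam y) (Pxt y y)))
         else if (\<exists>y\<in>children par x. t \<in> desc par y) then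
           Pxt (THE y. y \<in> children par x \<and> t \<in> desc par y) t
         else 0)"

definition Ppoly :: "('v \<Rightarrow> 'v) \<Rightarrow> ('v \<Rightarrow> nat) \<Rightarrow> ('v \<Rightarrow> real) \<Rightarrow> ('v \<Rightarrow> real) \<Rightarrow> 'v \<Rightarrow> 'v \<Rightarrow> real poly" where
  "Ppoly par lev lam bet x t = PQ par lam bet (lev x) x t"

end

theory Submission
  imports Defs
begin

text \<open>Call a pair (p, q) of real polynomials interlacing if both have only simple real zeros
  and positive leading coefficients, deg p = deg q + 1, and the Wronskian W(p, q) = p'q - pq'
  is positive on the real line; the last condition forces the zeros of p and q to interlace
  strictly. By induction on the level, (P_{x,x'}, P_{x,x}) is interlacing. Indeed P_{x,x},
  the lcm of the P_{y,x} for y in N_x, is the monic product of (z - b) over all their zeros b,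
  and the recursion gives
    lambda_x W(P_{x,x'}, P_{x,x}) = P_{x,x}^2 + sum_y lambda_y (P_{x,x} / P_{y,x})^2 W(P_{y,x}, P_{y,y}),
  which is positive also at the zeros of P_{x,x} because these are simple. The sign of the
  Wronskian then places a zero of P_{x,x'} between any two consecutive zeros of P_{x,x} and one
  beyond the last, so all but at most one zero of P_{x,x'} are real and simple, hence all are.
  Finally, for t below a child y, P_{x,t} = (P_{x,x} / P_{y,x}) P_{y,t} is a product of
  real-rooted factors.\<close>

subsection \<open>Polynomials with simple real zeros\<close>

definition simple_real_rooted :: "real poly \<Rightarrow> bool" where
  "simple_real_rooted p \<longleftrightarrow> p \<noteq> 0 \<and> card {x. poly p x = 0} = degree p"

lemma prod_linear_factors_dvd:
  fixes f :: "real poly"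
  assumes "finite R" "\<And>b. b \<in> R \<Longrightarrow> poly f b = 0"
  shows "(\<Prod>b\<in>R. [:-b, 1:]) dvd f"
  using assms
proof (induction R rule: finite_induct)
  case empty
  then show ?case by simp
next
  case (insert b R)
  then obtain g where g: "f = (\<Prod>b\<in>R. [:-b, 1:]) * g" by (auto elim: dvdE)
  have "poly (\<Prod>b\<in>R. [:-b, 1:]) b \<noteq> 0"
    using insert.hyps by (auto simp: poly_prod)
  moreover have "poly f b = 0" using insert.prems by simp
  ultimately have "poly g b = 0" using g by simp
  then obtain h where h: "g = [:-b, 1:] * h" by (auto simp: poly_eq_0_iff_dvd elim: dvdE)
  have "(\<Prod>b\<in>insert b R. [:-b, 1:]) = [:-b, 1:] * (\<Prod>b\<in>R. [:-b, 1:])"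
    using insert.hyps by simp
  with g h have "f = (\<Prod>b\<in>insert b R. [:-b, 1:]) * h" by (simp only: mult_ac)
  then show ?case by (rule dvdI)
qed

lemma prod_linear_factors_nonzero [simp]: "(\<Prod>b\<in>R. [:-b, 1:] :: real poly) \<noteq> 0"
  by (cases "finite R") auto

lemma degree_prod_linear_factors [simp]:
  "finite R \<Longrightarrow> degree (\<Prod>b\<in>R. [:-b, 1:] :: real poly) = card R"
  by (subst degree_prod_eq_sum_degree) auto

lemma lead_coeff_prod_linear_factors [simp]: "lead_coeff (\<Prod>b\<in>R. [:-b, 1:] :: real poly) = 1"
  by (simp add: lead_coeff_prod)

lemma roots_prod_linear_factors [simp]:
  "finite R \<Longrightarrow> {x. poly (\<Prod>b\<in>R. [:-b, 1:] :: real poly) x = 0} = R"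
  by (auto simp: poly_prod)

lemma simple_real_rooted_prod_linear_factors:
  "finite R \<Longrightarrow> simple_real_rooted (\<Prod>b\<in>R. [:-b, 1:])"
  by (simp add: simple_real_rooted_def)

lemma simple_real_rooted_finite_roots:
  "simple_real_rooted p \<Longrightarrow> finite {x. poly p x = 0}"
  using poly_roots_finite simple_real_rooted_def by blast

lemma simple_real_rooted_factorization:
  assumes "simple_real_rooted f"
  shows "f = smult (lead_coeff f) (\<Prod>b\<in>{x. poly f x = 0}. [:-b, 1:])"
proof -
  let ?R = "{x. poly f x = 0}"
  let ?P = "\<Prod>b\<in>?R. [:-b, 1:] :: real poly"
  have f0: "f \<noteq> 0" and card: "card ?R = degree f"
    using assms by (auto simp: simple_real_rooted_def)
  have fin: "finite ?R" by (rule simple_real_rooted_finite_roots[OF assms])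
  obtain g where g: "f = ?P * g" using prod_linear_factors_dvd[OF fin] by (auto elim: dvdE)
  with f0 have "g \<noteq> 0" by auto
  then have "degree f = degree ?P + degree g"
    by (metis g degree_mult_eq prod_linear_factors_nonzero)
  with card fin have "degree g = 0" by simp
  moreover have "lead_coeff f = lead_coeff g"
    by (metis g lead_coeff_mult lead_coeff_prod_linear_factors mult_1)
  ultimately have "g = [:lead_coeff f:]" by (metis degree_0_id)
  with g show ?thesis by simp
qed

lemma simple_real_rooted_pderiv_at_root:
  assumes "simple_real_rooted f" "poly f r = 0"
  shows "poly (pderiv f) r = lead_coeff f * (\<Prod>b\<in>{x. poly f x = 0} - {r}. r - b)"
proof -
  let ?R = "{x. poly f x = 0}"
  let ?Q = "\<Prod>b\<in>?R - {r}. [:-b, 1:] :: real poly"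
  have "(\<Prod>b\<in>?R. [:-b, 1:]) = [:-r, 1:] * ?Q"
    using assms by (intro prod.remove simple_real_rooted_finite_roots) auto
  then have "f = smult (lead_coeff f) ([:-r, 1:] * ?Q)"
    using simple_real_rooted_factorization[OF assms(1)] by simp
  then have "pderiv f = smult (lead_coeff f) ([:-r, 1:] * pderiv ?Q + ?Q * pderiv [:-r, 1:])"
    by (metis pderiv_smult pderiv_mult)
  then show ?thesis by (simp add: poly_prod pderiv_pCons)
qed

lemma simple_real_rooted_rsquarefree:
  assumes "simple_real_rooted f"
  shows "rsquarefree f"
  unfolding rsquarefree_roots
proof (intro allI notI)
  fix r assume r: "poly f r = 0 \<and> poly (pderiv f) r = 0"
  have "(\<Prod>b\<in>{x. poly f x = 0} - {r}. r - b) \<noteq> 0"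
    using simple_real_rooted_finite_roots[OF assms] by auto
  moreover have "lead_coeff f \<noteq> 0" using assms by (simp add: simple_real_rooted_def)
  moreover have "poly (pderiv f) r = lead_coeff f * (\<Prod>b\<in>{x. poly f x = 0} - {r}. r - b)"
    using simple_real_rooted_pderiv_at_root[OF assms] r by blast
  ultimately show False using r by simp
qed

lemma simple_real_rooted_order:
  assumes "simple_real_rooted p" "poly p a = 0"
  shows "order a p = 1"
  using assms simple_real_rooted_rsquarefree rsquarefree_root_order
  by (auto simp: simple_real_rooted_def)

lemma simple_real_rooted_pderiv_consecutive_roots:
  assumes f: "simple_real_rooted f" and u: "poly f u = 0" and v: "poly f v = 0" and "u < v"
    and between: "\<And>w. poly f w = 0 \<Longrightarrow> \<not> (u < w \<and> w < v)"
  shows "poly (pderiv f) u * poly (pderiv f) v < 0"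
proof -
  let ?R = "{x. poly f x = 0}"
  let ?R' = "?R - {u} - {v}"
  have fin: "finite ?R" by (rule simple_real_rooted_finite_roots[OF f])
  have c0: "lead_coeff f \<noteq> 0" using f by (simp add: simple_real_rooted_def)
  have eu: "(\<Prod>b\<in>?R - {u}. u - b) = (u - v) * (\<Prod>b\<in>?R'. u - b)"
    using prod.remove[of "?R - {u}" v "\<lambda>b. u - b"] fin u v \<open>u < v\<close> by auto
  have "?R - {v} - {u} = ?R'" by auto
  then have ev: "(\<Prod>b\<in>?R - {v}. v - b) = (v - u) * (\<Prod>b\<in>?R'. v - b)"
    using prod.remove[of "?R - {v}" u "\<lambda>b. v - b"] fin u v \<open>u < v\<close> by auto
  have pos: "(\<Prod>b\<in>?R'. (u - b) * (v - b)) > 0"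
  proof (rule prod_pos)
    fix b assume "b \<in> ?R'"
    then have "b < u \<or> v < b" using between \<open>u < v\<close> by force
    then show "(u - b) * (v - b) > 0"
      using \<open>u < v\<close> by (auto intro: mult_pos_pos mult_neg_neg)
  qed
  have "poly (pderiv f) u * poly (pderiv f) v
      = - ((lead_coeff f)\<^sup>2 * (v - u)\<^sup>2 * (\<Prod>b\<in>?R'. (u - b) * (v - b)))"
    unfolding simple_real_rooted_pderiv_at_root[OF f u] simple_real_rooted_pderiv_at_root[OF f v]
      eu ev prod.distrib
    by (simp add: power2_eq_square algebra_simps)
  also have "\<dots> < 0" using pos c0 \<open>u < v\<close> by simp
  finally show ?thesis .
qed

lemma simple_real_rooted_pderiv_pos_at_max_root:
  assumes "simple_real_rooted f" "lead_coeff f > 0" "poly f M = 0"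
    and "\<And>w. poly f w = 0 \<Longrightarrow> w \<le> M"
  shows "poly (pderiv f) M > 0"
proof -
  have "(\<Prod>b\<in>{x. poly f x = 0} - {M}. M - b) > 0"
    using assms(4) by (intro prod_pos) (auto simp: le_less)
  then show ?thesis
    unfolding simple_real_rooted_pderiv_at_root[OF assms(1,3)] using assms(2) by simp
qed

text \<open>\<open>f'\<close> has opposite signs at consecutive simple zeros of \<open>f\<close>, hence so does \<open>g\<close>.\<close>

lemma root_between_consecutive_roots:
  assumes f: "simple_real_rooted f" and u: "poly f u = 0" and v: "poly f v = 0" and "u < v"
    and between: "\<And>w. poly f w = 0 \<Longrightarrow> \<not> (u < w \<and> w < v)"
    and gu: "poly g u * poly (pderiv f) u > 0" and gv: "poly g v * poly (pderiv f) v > 0"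
  shows "\<exists>r>u. r < v \<and> poly g r = 0"
proof -
  have "poly (pderiv f) u * poly (pderiv f) v < 0"
    by (rule simple_real_rooted_pderiv_consecutive_roots[OF f u v \<open>u < v\<close> between])
  moreover have "(poly g u * poly g v) * (poly (pderiv f) u * poly (pderiv f) v) > 0"
    using mult_pos_pos[OF gu gv] by (simp add: algebra_simps)
  ultimately have "poly g u * poly g v < 0"
    by (meson mult_nonneg_nonpos not_le less_imp_le)
  then show ?thesis using poly_IVT[OF \<open>u < v\<close>] by blast
qed

lemma degree_one_has_root:
  fixes h :: "real poly"
  assumes "degree h = 1"
  shows "\<exists>r. poly h r = 0"
proof
  have "h \<noteq> 0" using assms by (metis degree_0 zero_neq_one)
  with assms have "coeff h 1 \<noteq> 0" by (metis leading_coeff_0_iff)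
  with assms show "poly h (- coeff h 0 / coeff h 1) = 0" by (simp add: poly_altdef)
qed

lemma simple_real_rootedI:
  fixes p :: "real poly"
  assumes sqf: "rsquarefree p" and deg: "degree p \<le> card {x. poly p x = 0} + 1"
  shows "simple_real_rooted p"
proof (rule ccontr)
  define R where "R = {x. poly p x = 0}"
  have p0: "p \<noteq> 0" using sqf by (simp add: rsquarefree_def)
  have fin: "finite R" using p0 poly_roots_finite R_def by blast
  assume "\<not> simple_real_rooted p"
  with p0 card_poly_roots_bound[OF p0] deg have degp: "degree p = card R + 1"
    by (simp add: simple_real_rooted_def R_def)
  obtain h where h: "p = (\<Prod>b\<in>R. [:-b, 1:]) * h"
    using prod_linear_factors_dvd[OF fin] R_def by (auto elim: dvdE)
  with p0 have "h \<noteq> 0" by auto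
  with h degp fin have "degree h = 1" by (simp add: degree_mult_eq)
  \<comment> \<open>the remaining linear factor has a real root, which is then a double root of \<open>p\<close>\<close>
  then obtain r where hr: "poly h r = 0" using degree_one_has_root by blast
  have pr: "poly p r = 0" using hr by (subst h) simp
  then have "r \<in> R" by (simp add: R_def)
  then have A: "(\<Prod>b\<in>R. [:-b, 1:]) = [:-r, 1:] * (\<Prod>b\<in>R - {r}. [:-b, 1:])"
    by (rule prod.remove[OF fin])
  obtain B where B: "h = [:-r, 1:] * B" using hr by (auto simp: poly_eq_0_iff_dvd elim: dvdE)
  have "p = [:-r, 1:] * ([:-r, 1:] * ((\<Prod>b\<in>R - {r}. [:-b, 1:]) * B))"
    unfolding h A B by (simp only: mult_ac)
  then have "poly (pderiv p) r = 0"
    by (simp only: pderiv_mult poly_add poly_mult) simp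
  with pr sqf show False by (simp add: rsquarefree_roots)
qed

lemma Lcm_simple_real_rooted:
  fixes p :: "'v \<Rightarrow> real poly"
  assumes fin: "finite C" and p: "\<And>y. y \<in> C \<Longrightarrow> simple_real_rooted (p y)"
  shows "Lcm (p ` C) = (\<Prod>b\<in>(\<Union>y\<in>C. {x. poly (p y) x = 0}). [:-b, 1:])"
proof (rule Lcm_eqI)
  let ?U = "\<Union>y\<in>C. {x. poly (p y) x = 0}"
  have finU: "finite ?U" using fin p simple_real_rooted_finite_roots by blast
  show "normalize (\<Prod>b\<in>?U. [:-b, 1:]) = (\<Prod>b\<in>?U. [:-b, 1:])"
    by (simp add: normalize_poly_def lead_coeff_prod one_pCons[symmetric])
  show "q dvd (\<Prod>b\<in>?U. [:-b, 1:])" if "q \<in> p ` C" for q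
  proof -
    from that obtain y where y: "y \<in> C" "q = p y" by blast
    have "(\<Prod>b\<in>{x. poly (p y) x = 0}. [:-b, 1:]) dvd (\<Prod>b\<in>?U. [:-b, 1:])"
      using y by (intro prod_dvd_prod_subset[OF finU]) auto
    moreover have "lead_coeff (p y) \<noteq> 0"
      using p[OF y(1)] by (simp add: simple_real_rooted_def)
    ultimately have "smult (lead_coeff (p y)) (\<Prod>b\<in>{x. poly (p y) x = 0}. [:-b, 1:])
        dvd (\<Prod>b\<in>?U. [:-b, 1:])"
      by (rule smult_dvd)
    then show ?thesis
      using y simple_real_rooted_factorization[OF p[OF y(1)]] by simp
  qed
  show "(\<Prod>b\<in>?U. [:-b, 1:]) dvd c" if "\<And>q. q \<in> p ` C \<Longrightarrow> q dvd c" for c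
  proof (rule prod_linear_factors_dvd[OF finU])
    fix b assume "b \<in> ?U"
    then obtain y where "y \<in> C" "poly (p y) b = 0" by blast
    moreover from this that obtain k where "c = p y * k" by (meson dvdE imageI)
    ultimately show "poly c b = 0" by simp
  qed
qed

definition real_rooted :: "real poly \<Rightarrow> bool" where
  "real_rooted p \<longleftrightarrow> (\<forall>z::complex. poly (map_poly of_real p) z = 0 \<longrightarrow> z \<in> \<real>)"

lemma map_poly_of_real_add:
  "map_poly (of_real :: real \<Rightarrow> 'a::real_algebra_1) (p + q)
    = map_poly of_real p + map_poly of_real q"
  by (rule poly_eqI) (simp add: coeff_map_poly)

lemma map_poly_of_real_mult:
  "map_poly (of_real :: real \<Rightarrow> 'a::{real_algebra_1,comm_ring}) (p * q)
    = map_poly of_real p * map_poly of_real q"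
  by (induction p) (simp_all add: map_poly_pCons map_poly_smult map_poly_of_real_add)

lemma real_rooted_mult: "real_rooted p \<Longrightarrow> real_rooted q \<Longrightarrow> real_rooted (p * q)"
  by (auto simp: real_rooted_def map_poly_of_real_mult)

lemma real_rooted_mult_cancel_left: "real_rooted (p * q) \<Longrightarrow> real_rooted q"
  by (auto simp: real_rooted_def map_poly_of_real_mult)

lemma real_rooted_const: "c \<noteq> 0 \<Longrightarrow> real_rooted [:c:]"
  by (simp add: real_rooted_def map_poly_pCons)

lemma real_rooted_one: "real_rooted 1"
  using real_rooted_const[of 1] by (simp add: one_pCons)

lemma real_rooted_prod_linear_factors: "real_rooted (\<Prod>b\<in>R. [:-b, 1:])"
proof (induction R rule: infinite_finite_induct)
  case (insert b R)
  have "real_rooted [:-b, 1:]" by (auto simp: real_rooted_def map_poly_pCons)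
  with insert show ?case by (metis prod.insert real_rooted_mult)
qed (simp_all add: real_rooted_one)

lemma simple_real_rooted_imp_real_rooted:
  assumes "simple_real_rooted f"
  shows "real_rooted f"
proof -
  have "f = [:lead_coeff f:] * (\<Prod>b\<in>{x. poly f x = 0}. [:-b, 1:])"
    using simple_real_rooted_factorization[OF assms] by simp
  moreover have "lead_coeff f \<noteq> 0" using assms by (simp add: simple_real_rooted_def)
  ultimately show ?thesis
    by (metis real_rooted_mult real_rooted_const real_rooted_prod_linear_factors)
qed

subsection \<open>Wronskians and interlacing\<close>

definition wronskian :: "real poly \<Rightarrow> real poly \<Rightarrow> real \<Rightarrow> real" where
  "wronskian p q x = poly (pderiv p) x * poly q x - poly p x * poly (pderiv q) x"

lemma wronskian_diff_left: "wronskian (f - g) h x = wronskian f h x - wronskian g h x"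
  by (simp add: wronskian_def pderiv_diff algebra_simps)

lemma wronskian_smult_left: "wronskian (smult c f) h x = c * wronskian f h x"
  by (simp add: wronskian_def pderiv_smult algebra_simps)

lemma wronskian_sum_left: "wronskian (\<Sum>y\<in>C. f y) h x = (\<Sum>y\<in>C. wronskian (f y) h x)"
  by (induction C rule: infinite_finite_induct)
    (simp_all add: wronskian_def pderiv_add algebra_simps)

lemma wronskian_mult_mult: "wronskian (h * f) (h * g) x = (poly h x)\<^sup>2 * wronskian f g x"
  by (simp add: wronskian_def pderiv_mult power2_eq_square algebra_simps)

lemma wronskian_swap: "wronskian g f x = - wronskian f g x"
  by (simp add: wronskian_def)

lemma wronskian_linear_mult_self: "wronskian ([:-b, 1:] * f) f x = (poly f x)\<^sup>2"
  by (simp only: wronskian_def pderiv_mult poly_add poly_mult)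
    (simp add: pderiv_pCons power2_eq_square algebra_simps)

text \<open>Positivity of the Wronskian is the form of strict interlacing of the zeros
  (see \<open>interlacing_roots_interlace\<close>) that survives the three-term recursion.\<close>

definition interlacing :: "real poly \<Rightarrow> real poly \<Rightarrow> bool" where
  "interlacing p q \<longleftrightarrow> simple_real_rooted p \<and> simple_real_rooted q
     \<and> lead_coeff p > 0 \<and> lead_coeff q > 0 \<and> degree p = degree q + 1
     \<and> (\<forall>x. wronskian p q x > 0)"

lemma interlacing_linear:
  assumes "c > 0"
  shows "interlacing (smult c [:-b, 1:]) 1"
proof -
  have "{x. poly (smult c [:-b, 1:]) x = 0} = {b}" using assms by auto
  moreover have "wronskian (smult c [:-b, 1:]) 1 x = c" for x
    by (simp add: wronskian_def pderiv_smult pderiv_pCons)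
  ultimately show ?thesis using assms by (simp add: interlacing_def simple_real_rooted_def)
qed

lemma interlacing_roots_interlace:
  assumes pq: "interlacing p q"
    and a_mono: "strict_mono_on {1..n} a" and a_roots: "a ` {1..n} = {r. poly p r = 0}"
  shows "\<exists>b. strict_mono_on {1..<n} b \<and> b ` {1..<n} = {r. poly q r = 0}
           \<and> (\<forall>i\<in>{1..<n}. a i < b i \<and> b i < a (Suc i))"
proof -
  have p: "simple_real_rooted p" and q: "simple_real_rooted q"
    and deg: "degree p = degree q + 1" and W: "\<And>x. wronskian p q x > 0"
    using pq by (auto simp: interlacing_def)
  have sign_q: "poly q r * poly (pderiv p) r > 0" if "poly p r = 0" for r
    using W[of r] that by (simp add: wronskian_def mult.commute)
  have "\<forall>i\<in>{1..<n}. \<exists>r. a i < r \<and> r < a (Suc i) \<and> poly q r = 0"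
  proof
    fix i assume i: "i \<in> {1..<n}"
    have ai: "i \<in> {1..n}" "Suc i \<in> {1..n}" using i by auto
    then have "poly p (a i) = 0" "poly p (a (Suc i)) = 0" using a_roots by auto
    moreover have "a i < a (Suc i)" using strict_mono_on_less[OF a_mono ai] by simp
    moreover have "\<not> (a i < w \<and> w < a (Suc i))" if "poly p w = 0" for w
    proof -
      have "w \<in> a ` {1..n}" using that a_roots by simp
      then obtain j where j: "j \<in> {1..n}" "w = a j" by blast
      have "a i < a j \<longleftrightarrow> i < j" "a j < a (Suc i) \<longleftrightarrow> j < Suc i"
        using strict_mono_on_less[OF a_mono] ai j(1) by blast+
      then show ?thesis using j(2) by linarith
    qed
    ultimately show "\<exists>r. a i < r \<and> r < a (Suc i) \<and> poly q r = 0"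
      using root_between_consecutive_roots[OF p] sign_q by blast
  qed
  from bchoice[OF this] obtain b
    where b: "\<forall>i\<in>{1..<n}. a i < b i \<and> b i < a (Suc i) \<and> poly q (b i) = 0"
    by blast
  have b_mono: "strict_mono_on {1..<n} b"
  proof (rule strict_mono_onI)
    fix i j assume ij: "i \<in> {1..<n}" "j \<in> {1..<n}" "i < j"
    then have "a (Suc i) \<le> a j" by (intro strict_mono_on_leD[OF a_mono]) auto
    moreover have "b i < a (Suc i)" "a j < b j" using b ij by auto
    ultimately show "b i < b j" by linarith
  qed
  have "card {r. poly q r = 0} = n - 1"
  proof -
    have "card {r. poly p r = 0} = n"
      using a_roots card_image[OF strict_mono_on_imp_inj_on[OF a_mono]] by simp
    with p q deg show ?thesis by (simp add: simple_real_rooted_def)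
  qed
  moreover have "card (b ` {1..<n}) = n - 1"
    using card_image[OF strict_mono_on_imp_inj_on[OF b_mono]] by simp
  moreover have "b ` {1..<n} \<subseteq> {r. poly q r = 0}" using b by auto
  ultimately have "b ` {1..<n} = {r. poly q r = 0}"
    using card_subset_eq[OF simple_real_rooted_finite_roots[OF q]] by metis
  with b_mono b show ?thesis by blast
qed

subsection \<open>One step of the recursion\<close>

lemma card_le_card_interleaved:
  fixes U S :: "real set"
  assumes "finite S" and "\<And>u. u \<in> U \<Longrightarrow> \<exists>s\<in>S. u < s \<and> (\<forall>w\<in>U. u < w \<longrightarrow> s < w)"
  shows "card U \<le> card S"
proof -
  have "\<forall>u\<in>U. \<exists>s. s \<in> S \<and> u < s \<and> (\<forall>w\<in>U. u < w \<longrightarrow> s < w)"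
    using assms(2) by blast
  from bchoice[OF this] obtain f
    where f: "\<forall>u\<in>U. f u \<in> S \<and> u < f u \<and> (\<forall>w\<in>U. u < w \<longrightarrow> f u < w)"
    by blast
  have "strict_mono_on U f"
  proof (rule strict_mono_onI)
    fix u w assume "u \<in> U" "w \<in> U" "u < w"
    with f have "f u < w" "w < f w" by auto
    then show "f u < f w" by simp
  qed
  with f assms(1) show ?thesis by (intro card_inj_on_le strict_mono_on_imp_inj_on) auto
qed

text \<open>With \<open>C = N\<^sub>x\<close>, \<open>p y = P_{y,x}\<close>, \<open>s y = P_{y,y}\<close>, \<open>lx = \<lambda>\<^sub>x\<close> and \<open>bx = \<beta>\<^sub>x\<close>,
  the polynomials \<open>L\<close> and \<open>P\<close> below are \<open>P_{x,x}\<close> and \<open>P_{x,x'}\<close>, and \<open>U\<close> is the set of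
  zeros of \<open>L\<close>.\<close>

locale jacobi_step =
  fixes C :: "'v set" and p s :: "'v \<Rightarrow> real poly" and lam :: "'v \<Rightarrow> real" and lx bx :: real
  assumes finite_C: "finite C"
    and interlacing_children: "\<And>y. y \<in> C \<Longrightarrow> interlacing (p y) (s y)"
    and lam_pos: "\<And>y. y \<in> C \<Longrightarrow> lam y > 0"
    and lx_pos: "lx > 0"
begin

definition L :: "real poly" where
  "L = Lcm (p ` C)"

definition P :: "real poly" where
  "P = smult (1 / lx) ([:-bx, 1:] * L - (\<Sum>y\<in>C. smult (lam y) (L * s y div p y)))"

definition U :: "real set" where
  "U = (\<Union>y\<in>C. {x. poly (p y) x = 0})"

lemma simple_real_rooted_children: "y \<in> C \<Longrightarrow> simple_real_rooted (p y)"
  using interlacing_children by (simp add: interlacing_def)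

lemma finite_U: "finite U"
  unfolding U_def using finite_C simple_real_rooted_children simple_real_rooted_finite_roots
  by blast

lemma L_eq_prod: "L = (\<Prod>b\<in>U. [:-b, 1:])"
  unfolding L_def U_def using Lcm_simple_real_rooted[OF finite_C simple_real_rooted_children] .

lemma simple_real_rooted_L: "simple_real_rooted L"
  unfolding L_eq_prod using finite_U by (rule simple_real_rooted_prod_linear_factors)

lemma lead_coeff_L [simp]: "lead_coeff L = 1"
  unfolding L_eq_prod by simp

lemma roots_L: "{x. poly L x = 0} = U"
  unfolding L_eq_prod using finite_U by simp

lemma L_nonzero [simp]: "L \<noteq> 0"
  unfolding L_eq_prod by simp

lemma p_nonzero: "y \<in> C \<Longrightarrow> p y \<noteq> 0"
  using simple_real_rooted_children by (simp add: simple_real_rooted_def)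

lemma p_mult_L_div: "y \<in> C \<Longrightarrow> p y * (L div p y) = L"
  unfolding L_def by (simp add: dvd_Lcm)

lemma L_mult_div_p: "y \<in> C \<Longrightarrow> L * f div p y = (L div p y) * f"
  by (metis p_mult_L_div p_nonzero mult.assoc nonzero_mult_div_cancel_left)

lemma P_eq: "P = smult (1 / lx) ([:-bx, 1:] * L - (\<Sum>y\<in>C. smult (lam y) ((L div p y) * s y)))"
  unfolding P_def by (simp add: L_mult_div_p cong: sum.cong)

lemma degree_P: "degree P = degree L + 1" and lead_coeff_P: "lead_coeff P = 1 / lx"
proof -
  define S where "S = (\<Sum>y\<in>C. smult (lam y) ((L div p y) * s y))"
  have deg_term: "degree (smult (lam y) ((L div p y) * s y)) \<le> degree L - 1" if y: "y \<in> C" for y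
  proof -
    have Q0: "L div p y \<noteq> 0" using p_mult_L_div[OF y] by (metis L_nonzero mult_zero_right)
    have s0: "s y \<noteq> 0" and deg_ps: "degree (p y) = degree (s y) + 1"
      using interlacing_children[OF y] by (auto simp: interlacing_def simple_real_rooted_def)
    have "degree L = degree (p y) + degree (L div p y)"
      using degree_mult_eq[OF p_nonzero[OF y] Q0] p_mult_L_div[OF y] by simp
    with Q0 s0 deg_ps show ?thesis by (simp add: degree_mult_eq)
  qed
  define A where "A = [:-bx, 1:] * L"
  have dA: "degree A = degree L + 1" and lA: "lead_coeff A = 1"
    unfolding A_def by (subst degree_mult_eq lead_coeff_mult; simp)+
  have "degree S \<le> degree L - 1"
    unfolding S_def by (rule degree_sum_le[OF finite_C deg_term])
  with dA have "degree (- S) < degree A" by simp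
  then have "degree (A - S) = degree L + 1" and "lead_coeff (A - S) = 1"
    using degree_add_eq_right[of "- S" A] lead_coeff_add_le[of "- S" A] dA lA by simp_all
  then show "degree P = degree L + 1" and "lead_coeff P = 1 / lx"
    using lx_pos by (simp_all add: P_eq S_def A_def)
qed

lemma wronskian_P_L:
  "wronskian P L z
     = ((poly L z)\<^sup>2 + (\<Sum>y\<in>C. lam y * (poly (L div p y) z)\<^sup>2 * wronskian (p y) (s y) z)) / lx"
proof -
  have "wronskian ((L div p y) * s y) L z = - (poly (L div p y) z)\<^sup>2 * wronskian (p y) (s y) z"
    if "y \<in> C" for y
    using wronskian_mult_mult[of "L div p y" "s y" "p y" z] wronskian_swap[of "s y" "p y" z]
    by (simp add: p_mult_L_div[OF that] mult.commute)
  then have "(\<Sum>y\<in>C. lam y * wronskian ((L div p y) * s y) L z)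
      = - (\<Sum>y\<in>C. lam y * (poly (L div p y) z)\<^sup>2 * wronskian (p y) (s y) z)"
    by (simp add: sum_negf[symmetric] mult.assoc)
  then show ?thesis
    unfolding P_eq wronskian_smult_left wronskian_diff_left wronskian_sum_left
      wronskian_linear_mult_self
    using lx_pos by (simp add: field_simps)
qed

lemma wronskian_P_L_pos: "wronskian P L z > 0"
proof -
  define T where "T y = lam y * (poly (L div p y) z)\<^sup>2 * wronskian (p y) (s y) z" for y
  have T_nonneg: "T y \<ge> 0" if "y \<in> C" for y
    using lam_pos[OF that] interlacing_children[OF that]
    by (simp add: T_def interlacing_def less_imp_le)
  have "(poly L z)\<^sup>2 + (\<Sum>y\<in>C. T y) > 0"
  proof (cases "poly L z = 0")
    case False
    with T_nonneg show ?thesis by (simp add: add_pos_nonneg sum_nonneg)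
  next
    case True
    \<comment> \<open>the zero \<open>z\<close> of \<open>L = p y * (L div p y)\<close> is simple, so \<open>L div p y\<close> does not vanish at \<open>z\<close>\<close>
    then obtain y where y: "y \<in> C" "poly (p y) z = 0" using roots_L unfolding U_def by blast
    have "poly (pderiv L) z \<noteq> 0"
      using True simple_real_rooted_rsquarefree[OF simple_real_rooted_L]
      by (simp add: rsquarefree_roots)
    moreover have "pderiv L = p y * pderiv (L div p y) + (L div p y) * pderiv (p y)"
      by (metis p_mult_L_div[OF y(1)] pderiv_mult)
    ultimately have "poly (L div p y) z \<noteq> 0" using y(2) by auto
    then have "T y > 0"
      using lam_pos[OF y(1)] interlacing_children[OF y(1)] by (simp add: T_def interlacing_def)
    then have "(\<Sum>y\<in>C. T y) > 0"
      using T_nonneg by (intro sum_pos2[OF finite_C y(1)]) auto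
    then show ?thesis by (simp add: add_nonneg_pos)
  qed
  then show ?thesis using lx_pos by (simp add: wronskian_P_L T_def)
qed

lemma sign_P_at_root_of_L:
  assumes "u \<in> U"
  shows "poly (- P) u * poly (pderiv L) u > 0"
proof -
  have "poly L u = 0" using assms roots_L by auto
  with wronskian_P_L_pos[of u] show ?thesis by (simp add: wronskian_def)
qed

lemma P_root_before_next_root_of_L:
  assumes u: "u \<in> U"
  shows "\<exists>r. poly P r = 0 \<and> u < r \<and> (\<forall>w\<in>U. u < w \<longrightarrow> r < w)"
proof (cases "\<exists>w\<in>U. u < w")
  case True
  define v where "v = Min {w\<in>U. u < w}"
  have fin: "finite {w\<in>U. u < w}" and ne: "{w\<in>U. u < w} \<noteq> {}"
    using True finite_U by auto
  have v: "v \<in> U" "u < v" using Min_in[OF fin ne] unfolding v_def by auto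
  have v_min: "v \<le> w" if "w \<in> U" "u < w" for w
    using Min_le[OF fin] that unfolding v_def by auto
  have "\<exists>r>u. r < v \<and> poly (- P) r = 0"
  proof (rule root_between_consecutive_roots[OF simple_real_rooted_L])
    show "poly L u = 0" "poly L v = 0" using u v roots_L by auto
    show "\<not> (u < w \<and> w < v)" if "poly L w = 0" for w
      using that roots_L v_min by force
  qed (use u v sign_P_at_root_of_L in auto)
  then show ?thesis using v_min by force
next
  case False
  have "poly (pderiv L) u > 0"
    using u False roots_L
    by (intro simple_real_rooted_pderiv_pos_at_max_root[OF simple_real_rooted_L]) force+
  with sign_P_at_root_of_L[OF u] have "poly P u < 0" by (simp add: mult_less_0_iff)
  moreover obtain X where "X > u" "poly P X > 0"
  proof -
    obtain N where N: "\<And>x. x \<ge> N \<Longrightarrow> lead_coeff P \<le> poly P x"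
      using poly_pinfty_gt_lc[of P] lead_coeff_P lx_pos by auto
    have "0 < lead_coeff P" using lead_coeff_P lx_pos by simp
    also have "\<dots> \<le> poly P (max N (u + 1))" by (rule N) simp
    finally show thesis by (intro that[of "max N (u + 1)"]) auto
  qed
  ultimately obtain r where "u < r" "poly P r = 0" using poly_IVT_pos by blast
  with False show ?thesis by auto
qed

lemma interlacing_P_L: "interlacing P L"
proof -
  have P0: "P \<noteq> 0" using lead_coeff_P lx_pos by auto
  have "card U \<le> card {x. poly P x = 0}"
    using P_root_before_next_root_of_L poly_roots_finite[OF P0]
    by (intro card_le_card_interleaved) auto
  moreover have "card U = degree L"
    using simple_real_rooted_L roots_L by (simp add: simple_real_rooted_def)
  moreover have "rsquarefree P"
    unfolding rsquarefree_roots
  proof (intro allI notI)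
    fix a assume "poly P a = 0 \<and> poly (pderiv P) a = 0"
    then have "wronskian P L a = 0" by (simp add: wronskian_def)
    with wronskian_P_L_pos[of a] show False by simp
  qed
  ultimately have "simple_real_rooted P"
    using degree_P by (intro simple_real_rootedI) auto
  then show ?thesis
    unfolding interlacing_def
    using simple_real_rooted_L degree_P lead_coeff_P lx_pos wronskian_P_L_pos by simp
qed

end

subsection \<open>The recursion on the tree\<close>

lemma lev_funpow: "tree_struct par lev \<Longrightarrow> lev ((par ^^ k) t) = lev t + k"
  by (induction k) (simp_all add: tree_struct_def)

lemma par_neq: "tree_struct par lev \<Longrightarrow> par x \<noteq> x"
  unfolding tree_struct_def by (metis n_not_Suc_n)

lemma desc_lev: "tree_struct par lev \<Longrightarrow> t \<in> desc par x \<Longrightarrow> lev t \<le> lev x"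
  unfolding desc_def using lev_funpow by fastforce

lemma child_lev: "tree_struct par lev \<Longrightarrow> y \<in> children par x \<Longrightarrow> lev x = Suc (lev y)"
  unfolding children_def tree_struct_def by auto

lemma desc_level_zero: "tree_struct par lev \<Longrightarrow> lev x = 0 \<Longrightarrow> desc par x = {x}"
  unfolding desc_def using lev_funpow by (fastforce intro: exI[of _ 0])

lemma desc_in_child:
  assumes "t \<in> desc par x" "t \<noteq> x"
  shows "\<exists>y\<in>children par x. t \<in> desc par y"
proof -
  obtain k where k: "(par ^^ k) t = x" using assms(1) unfolding desc_def by auto
  with assms(2) obtain j where "k = Suc j" by (cases k) auto
  with k have "(par ^^ j) t \<in> children par x" by (simp add: children_def)
  moreover have "t \<in> desc par ((par ^^ j) t)" unfolding desc_def by blast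
  ultimately show ?thesis by blast
qed

lemma desc_child_unique:
  assumes tree: "tree_struct par lev" and y: "y \<in> children par x" "y' \<in> children par x"
    and t: "t \<in> desc par y" "t \<in> desc par y'"
  shows "y = y'"
proof -
  obtain k k' where k: "(par ^^ k) t = y" "(par ^^ k') t = y'"
    using t unfolding desc_def by auto
  have "lev y = lev y'" using child_lev[OF tree y(1)] child_lev[OF tree y(2)] by simp
  with k have "k = k'" using lev_funpow[OF tree] by (metis add_left_cancel)
  with k show ?thesis by simp
qed

lemma PQ_Suc_self:
  "PQ par lam bet (Suc n) x x = Lcm ((\<lambda>y. PQ par lam bet n y x) ` children par x)"
  by (simp add: Let_def)

lemma PQ_Suc_parent:
  assumes "tree_struct par lev"
  shows "PQ par lam bet (Suc n) x (par x) =
    smult (1 / lam x) ([:- bet x, 1:] * Lcm ((\<lambda>y. PQ par lam bet n y x) ` children par x)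
      - (\<Sum>y\<in>children par x. smult (lam y)
          (Lcm ((\<lambda>y. PQ par lam bet n y x) ` children par x) * PQ par lam bet n y y
            div PQ par lam bet n y x)))"
  using par_neq[OF assms] by (simp add: Let_def)

lemma PQ_Suc_desc:
  assumes tree: "tree_struct par lev" and y: "y \<in> children par x" and t: "t \<in> desc par y"
  shows "PQ par lam bet (Suc n) x t =
    Lcm ((\<lambda>y. PQ par lam bet n y x) ` children par x) * PQ par lam bet n y t
      div PQ par lam bet n y x"
proof -
  have "lev t < lev x" using desc_lev[OF tree t] child_lev[OF tree y] by simp
  moreover have "lev x < lev (par x)" using tree by (simp add: tree_struct_def)
  ultimately have "t \<noteq> x" "t \<noteq> par x" by auto
  moreover have "(THE y. y \<in> children par x \<and> t \<in> desc par y) = y"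
    using y t desc_child_unique[OF tree] by blast
  ultimately show ?thesis using y t by (auto simp: Let_def)
qed

lemma PQ_interlacing_real_rooted:
  assumes tree: "tree_struct par lev" and lam_pos: "\<forall>x. lam x > 0"
  shows "lev x = n \<Longrightarrow> interlacing (PQ par lam bet n x (par x)) (PQ par lam bet n x x)
           \<and> (\<forall>t\<in>desc par x. real_rooted (PQ par lam bet n x t))"
proof (induction n arbitrary: x)
  case 0
  then show ?case
    using interlacing_linear[of "1 / lam x" "bet x"] lam_pos par_neq[OF tree]
    by (simp add: desc_level_zero[OF tree] real_rooted_one)
next
  case (Suc n)
  let ?p = "\<lambda>y. PQ par lam bet n y x" and ?s = "\<lambda>y. PQ par lam bet n y y"
  have IH: "interlacing (?p y) (?s y) \<and> (\<forall>t\<in>desc par y. real_rooted (PQ par lam bet n y t))"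
    if "y \<in> children par x" for y
    using Suc.IH[of y] Suc.prems child_lev[OF tree that] that by (simp add: children_def)
  interpret jacobi_step "children par x" ?p ?s lam "lam x" "bet x"
    using tree IH lam_pos by unfold_locales (auto simp: tree_struct_def)
  have self: "PQ par lam bet (Suc n) x x = L"
    unfolding L_def by (rule PQ_Suc_self)
  have parent: "PQ par lam bet (Suc n) x (par x) = P"
    unfolding P_def L_def by (rule PQ_Suc_parent[OF tree])
  have "real_rooted (PQ par lam bet (Suc n) x t)" if t: "t \<in> desc par x" for t
  proof (cases "t = x")
    case True
    then show ?thesis
      using self simple_real_rooted_L simple_real_rooted_imp_real_rooted by simp
  next
    case False
    then obtain y where y: "y \<in> children par x" "t \<in> desc par y"
      using desc_in_child[OF t] by blast
    have "real_rooted (?p y * (L div ?p y))"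
      using p_mult_L_div[OF y(1)] simple_real_rooted_L simple_real_rooted_imp_real_rooted by simp
    then have "real_rooted (L div ?p y)" by (rule real_rooted_mult_cancel_left)
    moreover have "PQ par lam bet (Suc n) x t = (L div ?p y) * PQ par lam bet n y t"
      using PQ_Suc_desc[OF tree y] L_mult_div_p[OF y(1)] by (simp add: L_def)
    ultimately show ?thesis using IH[OF y(1)] y(2) by (simp add: real_rooted_mult)
  qed
  with interlacing_P_L self parent show ?case by simp
qed

theorem theorem1:
  fixes par :: "'v \<Rightarrow> 'v" and lev :: "'v \<Rightarrow> nat" and lam bet :: "'v \<Rightarrow> real"
  assumes tree: "tree_struct par lev"
    and lam_pos: "\<forall>x. lam x > 0"
  shows "(\<forall>x. \<forall>t\<in>desc' par x. \<forall>z::complex.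
            poly (map_poly complex_of_real (Ppoly par lev lam bet x t)) z = 0 \<longrightarrow> z \<in> \<real>)
    \<and> (\<forall>x.
         (\<forall>a. poly (Ppoly par lev lam bet x x) a = 0 \<longrightarrow> order a (Ppoly par lev lam bet x x) = 1)
       \<and> (\<forall>a. poly (Ppoly par lev lam bet x (par x)) a = 0 \<longrightarrow> order a (Ppoly par lev lam bet x (par x)) = 1)
       \<and> degree (Ppoly par lev lam bet x (par x)) = degree (Ppoly par lev lam bet x x) + 1
       \<and> (\<forall>(n::nat) (a::nat \<Rightarrow> real).
            strict_mono_on {1..n} a \<and> a ` {1..n} = {r. poly (Ppoly par lev lam bet x (par x)) r = 0}
            \<longrightarrow> (\<exists>b::nat \<Rightarrow> real.
                   strict_mono_on {1..<n} b \<and> b ` {1..<n} = {r. poly (Ppoly par lev lam bet x x) r = 0}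
                   \<and> (\<forall>i\<in>{1..<n}. a i < b i \<and> b i < a (Suc i)))))"
proof -
  have inv: "interlacing (Ppoly par lev lam bet x (par x)) (Ppoly par lev lam bet x x)
      \<and> (\<forall>t\<in>desc par x. real_rooted (Ppoly par lev lam bet x t))" for x
    unfolding Ppoly_def using PQ_interlacing_real_rooted[OF tree lam_pos] by blast
  then have "real_rooted (Ppoly par lev lam bet x t)" if "t \<in> desc' par x" for x t
    using that simple_real_rooted_imp_real_rooted
    by (auto simp: desc'_def interlacing_def)
  moreover have "simple_real_rooted (Ppoly par lev lam bet x x)"
    and "simple_real_rooted (Ppoly par lev lam bet x (par x))"
    and "degree (Ppoly par lev lam bet x (par x)) = degree (Ppoly par lev lam bet x x) + 1" for x
    using inv by (auto simp: interlacing_def)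
  ultimately show ?thesis
    using inv interlacing_roots_interlace simple_real_rooted_order
    unfolding real_rooted_def by blast
qed

end
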